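(* Let $f,g$ satisfy the standing assumptions below and suppose $\beta\ge\frac{2M_fQ_g}{\mu^3}$. Then for any $(x,y)\in\mathbb{R}^n\times\mathbb{R}^p$, $0\in\mathcal{D}_h(x,y)$ if and only if $0\in\hat{\mathcal{D}}_p(x,y)$.
   Context: Standing assumptions. (A1) Constants $M_f,\mu,L_g,Q_g>0$ exist such that: $f:\mathbb{R}^n\times\mathbb{R}^p\to\mathbb{R}$ is $M_f$-Lipschitz; $g$ is twice differentiable with $\nabla^2_{yy}g\succeq\mu I_p$; $\nabla g$ is $L_g$-Lipschitz; $\nabla^2_{yy}g,\nabla^2_{xy}g$ are $Q_g$-Lipschitz; $\nabla^2_{yy}g$ is continuously differentiable ($\nabla^2_{xy}g\in\mathbb{R}^{n\times p}$ has entries $\partial^2g/\partial x_i\partial y_j$). (A2) $f$ is a potential function of a conservative field $\mathcal{D}_f$ with compact convex values of norm at most $M_f$. Notation (all at $(x,y)$): $H=\nabla^2_{yy}g$; $\mathcal{A}(x,y):=y-H^{-1}\nabla_yg$; $\nabla^3_{xyy}g(x,y)[d]:=\lim_{t\to0}\frac1t(\nabla^2_{xy}g(x,y+td)-\nabla^2_{xy}g(x,y))$, $\nabla^3_{yyy}g(x,y)[d]:=\lim_{t\to0}\frac1t(\nabla^2_{yy}g(x,y+td)-\nabla^2_{yy}g(x,y))$; $J_{A,x}:=-\nabla^2_{xy}gH^{-1}+\nabla^3_{xyy}g[H^{-1}\nabla_yg]H^{-1}$, $J_{A,y}:=\nabla^3_{yyy}g[H^{-1}\nabla_yg]H^{-1}$;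 $\mathcal{D}_h(x,y):=\{(d_x+J_{A,x}d_y+\beta\nabla^2_{xy}g\nabla_yg,\ J_{A,y}d_y+\beta H\nabla_yg):(d_x,d_y)\in\mathcal{D}_f(x,\mathcal{A}(x,y))\}$; $W(x,y):=[I_n,\ -\nabla^2_{xy}g(x,y)H^{-1}]\in\mathbb{R}^{n\times(n+p)}$; $\hat{\mathcal{D}}_p(x,y):=\{W(x,y)^\top W(x,y)d+(0,\beta\nabla_yg(x,y)):d\in\mathcal{D}_f(x,\mathcal{A}(x,y))\}$. *)

theory Defs
  imports "HOL-Analysis.Analysis"
begin

definition abs_continuous_curve :: "(real \<Rightarrow> 'a::real_normed_vector) \<Rightarrow> bool" where
  "abs_continuous_curve \<gamma> \<longleftrightarrow>
     (\<forall>\<epsilon>>0. \<exists>\<delta>>0. \<forall>(n::nat) (s::nat \<Rightarrow> real) (t::nat \<Rightarrow> real).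
        (\<forall>i<n. 0 \<le> s i \<and> s i \<le> t i \<and> t i \<le> 1) \<and>
        (\<forall>i<n. \<forall>j<n. i \<noteq> j \<longrightarrow> t i \<le> s j \<or> t j \<le> s i) \<and>
        (\<Sum>i<n. t i - s i) < \<delta>
        \<longrightarrow> (\<Sum>i<n. norm (\<gamma> (t i) - \<gamma> (s i))) < \<epsilon>)"

definition cf_integral :: "('a::euclidean_space \<Rightarrow> 'a set) \<Rightarrow> (real \<Rightarrow> 'a) \<Rightarrow> real" where
  "cf_integral D \<gamma> = integral {0..1}
     (\<lambda>t. Sup ((\<lambda>v. inner (vector_derivative \<gamma> (at t)) v) ` D (\<gamma> t)))"

definition conservative_field :: "('a::euclidean_space \<Rightarrow> 'a set) \<Rightarrow> bool" where
  "conservative_field D \<longleftrightarrow>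
     closed {(z, v). v \<in> D z} \<and>
     (\<forall>z. D z \<noteq> {} \<and> compact (D z)) \<and>
     (\<forall>z. \<exists>r>0. bounded (\<Union> (D ` ball z r))) \<and>
     (\<forall>\<gamma>. abs_continuous_curve \<gamma> \<and> \<gamma> 0 = \<gamma> 1 \<longrightarrow> cf_integral D \<gamma> = 0)"

definition potential_of :: "('a::euclidean_space \<Rightarrow> real) \<Rightarrow> ('a \<Rightarrow> 'a set) \<Rightarrow> bool" where
  "potential_of f D \<longleftrightarrow>
     (\<forall>\<gamma>. abs_continuous_curve \<gamma> \<longrightarrow> f (\<gamma> 1) - f (\<gamma> 0) = cf_integral D \<gamma>)"

definition grad_x :: "((real^'n) \<times> (real^'p) \<Rightarrow> real) \<Rightarrow> (real^'n) \<times> (real^'p) \<Rightarrow> real^'n" where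
  "grad_x g z = (\<chi> i. frechet_derivative g (at z) (axis i 1, 0))"

definition grad_y :: "((real^'n) \<times> (real^'p) \<Rightarrow> real) \<Rightarrow> (real^'n) \<times> (real^'p) \<Rightarrow> real^'p" where
  "grad_y g z = (\<chi> j. frechet_derivative g (at z) (0, axis j 1))"

definition hess_yy :: "((real^'n) \<times> (real^'p) \<Rightarrow> real) \<Rightarrow> (real^'n) \<times> (real^'p) \<Rightarrow> real^'p^'p" where
  "hess_yy g z = (\<chi> i j. frechet_derivative (\<lambda>w. grad_y g w $ j) (at z) (0, axis i 1))"

definition hess_xy :: "((real^'n) \<times> (real^'p) \<Rightarrow> real) \<Rightarrow> (real^'n) \<times> (real^'p) \<Rightarrow> real^'p^'n" where
  "hess_xy g z = (\<chi> i j. frechet_derivative (\<lambda>w. grad_y g w $ j) (at z) (axis i 1, 0))"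

definition twice_differentiable :: "((real^'n) \<times> (real^'p) \<Rightarrow> real) \<Rightarrow> bool" where
  "twice_differentiable g \<longleftrightarrow>
     (\<forall>z. g differentiable (at z) \<and> (\<lambda>w. (grad_x g w, grad_y g w)) differentiable (at z))"

definition mat_norm :: "real^'m^'k \<Rightarrow> real" where
  "mat_norm M = onorm (\<lambda>v. M *v v)"

definition d3_xyy :: "((real^'n) \<times> (real^'p) \<Rightarrow> real) \<Rightarrow> real^'n \<Rightarrow> real^'p \<Rightarrow> real^'p \<Rightarrow> real^'p^'n" where
  "d3_xyy g x y d = Lim (at (0::real)) (\<lambda>t. (1/t) *\<^sub>R (hess_xy g (x, y + t *\<^sub>R d) - hess_xy g (x, y)))"

definition d3_yyy :: "((real^'n) \<times> (real^'p) \<Rightarrow> real) \<Rightarrow> real^'n \<Rightarrow> real^'p \<Rightarrow> real^'p \<Rightarrow> real^'p^'p" where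
  "d3_yyy g x y d = Lim (at (0::real)) (\<lambda>t. (1/t) *\<^sub>R (hess_yy g (x, y + t *\<^sub>R d) - hess_yy g (x, y)))"

definition A_map :: "((real^'n) \<times> (real^'p) \<Rightarrow> real) \<Rightarrow> real^'n \<Rightarrow> real^'p \<Rightarrow> real^'p" where
  "A_map g x y = y - matrix_inv (hess_yy g (x, y)) *v grad_y g (x, y)"

definition J_Ax :: "((real^'n) \<times> (real^'p) \<Rightarrow> real) \<Rightarrow> real^'n \<Rightarrow> real^'p \<Rightarrow> real^'p^'n" where
  "J_Ax g x y = (let Hi = matrix_inv (hess_yy g (x, y)) in
     - (hess_xy g (x, y) ** Hi) + d3_xyy g x y (Hi *v grad_y g (x, y)) ** Hi)"

definition J_Ay :: "((real^'n) \<times> (real^'p) \<Rightarrow> real) \<Rightarrow> real^'n \<Rightarrow> real^'p \<Rightarrow> real^'p^'p" where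
  "J_Ay g x y = (let Hi = matrix_inv (hess_yy g (x, y)) in
     d3_yyy g x y (Hi *v grad_y g (x, y)) ** Hi)"

definition D_h :: "((real^'n) \<times> (real^'p) \<Rightarrow> ((real^'n) \<times> (real^'p)) set) \<Rightarrow> ((real^'n) \<times> (real^'p) \<Rightarrow> real)
    \<Rightarrow> real \<Rightarrow> real^'n \<Rightarrow> real^'p \<Rightarrow> ((real^'n) \<times> (real^'p)) set" where
  "D_h Df g \<beta> x y =
     (\<lambda>(dx, dy). (dx + J_Ax g x y *v dy + \<beta> *\<^sub>R (hess_xy g (x, y) *v grad_y g (x, y)),
                  J_Ay g x y *v dy + \<beta> *\<^sub>R (hess_yy g (x, y) *v grad_y g (x, y))))
     ` Df (x, A_map g x y)"

text \<open>W(x,y) = [I_n, -hess_xy H^{-1}] as a linear map R^n x R^p -> R^n.\<close>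
definition W_map :: "((real^'n) \<times> (real^'p) \<Rightarrow> real) \<Rightarrow> real^'n \<Rightarrow> real^'p \<Rightarrow> (real^'n) \<times> (real^'p) \<Rightarrow> real^'n" where
  "W_map g x y d = fst d - (hess_xy g (x, y) ** matrix_inv (hess_yy g (x, y))) *v snd d"

definition D_p_hat :: "((real^'n) \<times> (real^'p) \<Rightarrow> ((real^'n) \<times> (real^'p)) set) \<Rightarrow> ((real^'n) \<times> (real^'p) \<Rightarrow> real)
    \<Rightarrow> real \<Rightarrow> real^'n \<Rightarrow> real^'p \<Rightarrow> ((real^'n) \<times> (real^'p)) set" where
  "D_p_hat Df g \<beta> x y =
     (\<lambda>d. adjoint (W_map g x y) (W_map g x y d) + (0, \<beta> *\<^sub>R grad_y g (x, y)))
     ` Df (x, A_map g x y)"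

end

theory Submission
  imports Defs
begin

(*
  If 0 lies in D_h(x,y), its second component reads
  T (H^-1 d_y) = - beta H grad_y g  with  T = nabla^3_yyy g [H^-1 grad_y g].
  As the derivative of the Q_g-Lipschitz map nabla^2_yy g, the trilinear form has norm at
  most Q_g, so pairing with grad_y g gives
  beta mu |grad_y g|^2 <= Q_g |H^-1 grad_y g| |H^-1 d_y| |grad_y g| <= Q_g M_f |grad_y g|^2 / mu^2,
  which forces grad_y g = 0 as soon as beta mu^3 > M_f Q_g.  Also 0 in D_p_hat(x,y) forces
  grad_y g = 0, because the first block of W^T is the identity, so W^T is injective.
  Where grad_y g = 0 the third-derivative terms vanish, J_Ax = - nabla^2_xy g H^-1 and
  J_Ay = 0, and both conditions say that W d = 0 for some d in D_f(x, A(x,y)).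
*)

lemma invertible_matrix_inv_right:
  assumes "invertible (A :: 'a::semiring_1^'n^'m)"
  shows "A ** matrix_inv A = mat 1"
proof -
  have "\<exists>A'. A ** A' = mat 1 \<and> A' ** A = mat 1"
    using assms unfolding invertible_def by blast
  from someI_ex[OF this] show ?thesis
    unfolding matrix_inv_def by auto
qed

lemma uminus_matrix_vector_mult: "(- A) *v v = - (A *v v)"
  for A :: "'a::ring_1^'n^'m"
  by (simp add: vec_eq_iff matrix_vector_mult_def sum_negf)

lemma bounded_linear_matrix_vector_mult_const: "bounded_linear (\<lambda>A::real^'n^'m. A *v b)"
proof -
  have "linear (\<lambda>A::real^'n^'m. A *v b)"
    by (rule linearI) (simp_all add: matrix_vector_mult_add_rdistrib scaleR_matrix_vector_assoc)
  then show ?thesis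
    by (simp add: linear_conv_bounded_linear)
qed

lemma norm_matrix_vector_mult_le_mat_norm: "norm (M *v v) \<le> mat_norm M * norm v"
  unfolding mat_norm_def by (rule onorm) simp

lemma invertible_if_coercive:
  fixes H :: "real^'n^'n"
  assumes "\<mu> > 0" and coercive: "\<And>v. \<mu> * (norm v)\<^sup>2 \<le> v \<bullet> (H *v v)"
  shows "invertible H"
proof -
  have "u = 0" if "H *v u = 0" for u
    using coercive[of u] that \<open>\<mu> > 0\<close>
    by (metis inner_zero_right mult_pos_pos not_le zero_less_norm_iff zero_less_power)
  then show ?thesis
    using matrix_left_invertible_ker invertible_left_inverse by blast
qed

lemma norm_matrix_inv_mult_le:
  fixes H :: "real^'n^'n"
  assumes "\<mu> > 0" and coercive: "\<And>v. \<mu> * (norm v)\<^sup>2 \<le> v \<bullet> (H *v v)"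
  shows "norm (matrix_inv H *v w) \<le> norm w / \<mu>"
proof -
  define u where "u = matrix_inv H *v w"
  have "H *v u = w"
    using invertible_matrix_inv_right[OF invertible_if_coercive[OF assms]]
    by (simp add: u_def matrix_vector_mul_assoc)
  then have "\<mu> * (norm u)\<^sup>2 \<le> norm u * norm w"
    using coercive[of u] norm_cauchy_schwarz[of u w] by simp
  then have "\<mu> * norm u \<le> norm w"
    by (cases "norm u = 0") (auto simp: power2_eq_square)
  then show ?thesis
    using \<open>\<mu> > 0\<close> by (simp add: u_def field_simps)
qed

lemma difference_quotient_tendsto_derivative:
  assumes "(f has_derivative f') (at z)"
  shows "((\<lambda>t. (1/t) *\<^sub>R (f (z + t *\<^sub>R h) - f z)) \<longlongrightarrow> f' h) (at 0)"
proof -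
  have "((\<lambda>t. f (z + t *\<^sub>R h)) has_derivative (\<lambda>t. f' (t *\<^sub>R h))) (at 0)"
  proof -
    have "((\<lambda>t. z + t *\<^sub>R h) has_derivative (\<lambda>t. t *\<^sub>R h)) (at 0)"
      by (auto intro!: derivative_eq_intros)
    from diff_chain_at[OF this] assms show ?thesis
      by (simp add: o_def)
  qed
  then have "((\<lambda>t. norm (f (z + t *\<^sub>R h) - f z - t *\<^sub>R f' h) / norm t) \<longlongrightarrow> 0) (at 0)"
    using linear_cmul[OF has_derivative_linear[OF assms]]
    by (simp add: has_derivative_at)
  moreover have "\<forall>\<^sub>F t in at 0. norm (f (z + t *\<^sub>R h) - f z - t *\<^sub>R f' h) / norm t
      = norm ((1/t) *\<^sub>R (f (z + t *\<^sub>R h) - f z) - f' h)"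
    using eventually_neq_at_within[of 0 0 UNIV]
  proof eventually_elim
    case (elim t)
    then have "(1/t) *\<^sub>R (f (z + t *\<^sub>R h) - f z) - f' h
        = (1/t) *\<^sub>R (f (z + t *\<^sub>R h) - f z - t *\<^sub>R f' h)"
      by (simp add: scaleR_diff_right)
    then show ?case
      by (simp add: divide_inverse mult.commute)
  qed
  ultimately have "((\<lambda>t. norm ((1/t) *\<^sub>R (f (z + t *\<^sub>R h) - f z) - f' h)) \<longlongrightarrow> 0) (at 0)"
    by (rule Lim_transform_eventually)
  then show ?thesis
    by (simp add: tendsto_norm_zero_iff LIM_zero_iff)
qed

lemma norm_derivative_le_lipschitz:
  assumes "(f has_derivative f') (at z)"
    and lipschitz: "\<And>w. norm (f w - f z) \<le> C * norm (w - z)"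
  shows "norm (f' h) \<le> C * norm h"
proof (rule Lim_norm_ubound[OF _ difference_quotient_tendsto_derivative[OF assms(1)]])
  show "\<forall>\<^sub>F t in at 0. norm ((1/t) *\<^sub>R (f (z + t *\<^sub>R h) - f z)) \<le> C * norm h"
    using eventually_neq_at_within[of 0 0 UNIV]
  proof eventually_elim
    case (elim t)
    have bound: "norm (f (z + t *\<^sub>R h) - f z) \<le> C * (\<bar>t\<bar> * norm h)"
      using lipschitz[of "z + t *\<^sub>R h"] by simp
    have "norm ((1/t) *\<^sub>R (f (z + t *\<^sub>R h) - f z)) = norm (f (z + t *\<^sub>R h) - f z) / \<bar>t\<bar>"
      by simp
    also have "\<dots> \<le> C * norm h"
      using bound elim
      by (simp add: divide_le_eq ac_simps)
    finally show ?case .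
  qed
qed simp

lemma d3_yyy_eq_derivative:
  assumes "(hess_yy g has_derivative T) (at (x, y))"
  shows "d3_yyy g x y d = T (0, d)"
  using difference_quotient_tendsto_derivative[OF assms, of "(0, d)"]
  unfolding d3_yyy_def by (simp add: tendsto_Lim)

lemma d3_yyy_zero: "d3_yyy g x y 0 = 0"
  unfolding d3_yyy_def by (simp add: tendsto_Lim)

lemma d3_xyy_zero: "d3_xyy g x y 0 = 0"
  unfolding d3_xyy_def by (simp add: tendsto_Lim)

lemma norm_d3_yyy_mult_le:
  assumes "(hess_yy g has_derivative T) (at (x, y))"
    and Hyy_lip: "\<And>z w. mat_norm (hess_yy g z - hess_yy g w) \<le> Q * dist z w"
  shows "norm (d3_yyy g x y d *v b) \<le> Q * norm d * norm b"
proof -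
  have deriv: "((\<lambda>z. hess_yy g z *v b) has_derivative (\<lambda>h. T h *v b)) (at (x, y))"
    by (rule bounded_linear.has_derivative[OF bounded_linear_matrix_vector_mult_const assms(1)])
  have lipschitz:
    "norm (hess_yy g w *v b - hess_yy g (x, y) *v b) \<le> (Q * norm b) * norm (w - (x, y))" for w
  proof -
    have "norm (hess_yy g w *v b - hess_yy g (x, y) *v b) = norm ((hess_yy g w - hess_yy g (x, y)) *v b)"
      by (simp add: matrix_vector_mult_diff_rdistrib)
    also have "\<dots> \<le> mat_norm (hess_yy g w - hess_yy g (x, y)) * norm b"
      by (rule norm_matrix_vector_mult_le_mat_norm)
    also have "\<dots> \<le> Q * norm (w - (x, y)) * norm b"
      using Hyy_lip[of w "(x, y)"] by (simp add: dist_norm mult_right_mono)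
    finally show ?thesis by (simp add: ac_simps)
  qed
  show ?thesis
    using norm_derivative_le_lipschitz[OF deriv lipschitz, of "(0, d)"] d3_yyy_eq_derivative[OF assms(1)]
    by (simp add: ac_simps)
qed

lemma J_Ax_grad_y_zero:
  assumes "grad_y g (x, y) = 0"
  shows "J_Ax g x y = - (hess_xy g (x, y) ** matrix_inv (hess_yy g (x, y)))"
  using assms by (simp add: J_Ax_def Let_def d3_xyy_zero)

lemma J_Ay_grad_y_zero:
  assumes "grad_y g (x, y) = 0"
  shows "J_Ay g x y = 0"
  using assms by (simp add: J_Ay_def Let_def d3_yyy_zero)

lemma W_map_Pair_zero: "W_map g x y (a, 0) = a"
  by (simp add: W_map_def)

lemma linear_W_map: "linear (W_map g x y)"
  unfolding W_map_def
  by (rule linearI) (simp_all add: matrix_vector_right_distrib scaleR_right_diff_distrib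
      matrix_vector_mult_scaleR)

lemma fst_adjoint_W_map: "fst (adjoint (W_map g x y) u) = u"
proof -
  have "a \<bullet> fst (adjoint (W_map g x y) u) = a \<bullet> u" for a
  proof -
    have "(a, 0) \<bullet> adjoint (W_map g x y) u = W_map g x y (a, 0) \<bullet> u"
      by (rule adjoint_works[OF linear_W_map])
    then show ?thesis
      by (cases "adjoint (W_map g x y) u") (simp add: W_map_Pair_zero)
  qed
  then show ?thesis
    using vector_eq_ldot by blast
qed

lemma zero_in_D_h_iff_if_grad_y_zero:
  assumes "grad_y g (x, y) = 0"
  shows "0 \<in> D_h Df g \<beta> x y \<longleftrightarrow> (\<exists>d\<in>Df (x, A_map g x y). W_map g x y d = 0)"
  using assms unfolding D_h_def W_map_def
  by (force simp: J_Ax_grad_y_zero J_Ay_grad_y_zero uminus_matrix_vector_mult zero_prod_def)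

lemma zero_in_D_p_hat_iff:
  assumes "\<beta> \<noteq> 0"
  shows "0 \<in> D_p_hat Df g \<beta> x y \<longleftrightarrow>
    grad_y g (x, y) = 0 \<and> (\<exists>d\<in>Df (x, A_map g x y). W_map g x y d = 0)"
proof -
  have "adjoint (W_map g x y) w + (0, \<beta> *\<^sub>R grad_y g (x, y)) = 0 \<longleftrightarrow>
      w = 0 \<and> grad_y g (x, y) = 0" for w
    using fst_adjoint_W_map[of g x y w] linear_0[OF adjoint_linear[OF linear_W_map[of g x y]]] assms
    by (cases "adjoint (W_map g x y) w") (auto simp: zero_prod_def)
  then show ?thesis
    unfolding D_p_hat_def by auto
qed

lemma grad_y_zero_if_zero_in_D_h:
  fixes g :: "(real^'n) \<times> (real^'p) \<Rightarrow> real"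
  assumes "\<mu> > 0" "Q \<ge> 0" "\<beta> \<ge> 0" "M * Q < \<beta> * \<mu> ^ 3"
    and coercive: "\<And>v. \<mu> * (norm v)\<^sup>2 \<le> v \<bullet> (hess_yy g (x, y) *v v)"
    and Hyy_deriv: "(hess_yy g has_derivative T) (at (x, y))"
    and Hyy_lip: "\<And>z w. mat_norm (hess_yy g z - hess_yy g w) \<le> Q * dist z w"
    and Df_bound: "\<And>d. d \<in> Df (x, A_map g x y) \<Longrightarrow> norm d \<le> M"
    and "0 \<in> D_h Df g \<beta> x y"
  shows "grad_y g (x, y) = 0"
proof -
  define H where "H = hess_yy g (x, y)"
  define gy where "gy = grad_y g (x, y)"
  obtain dx dy where "(dx, dy) \<in> Df (x, A_map g x y)"
    and second: "J_Ay g x y *v dy + \<beta> *\<^sub>R (H *v gy) = 0"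
    using \<open>0 \<in> D_h Df g \<beta> x y\<close> unfolding D_h_def by (auto simp: H_def gy_def zero_prod_def)
  then have "norm dy \<le> M"
    using Df_bound norm_snd_le[of dy dx] by fastforce
  define v where "v = matrix_inv H *v gy"
  define w where "w = matrix_inv H *v dy"
  have "norm v \<le> norm gy / \<mu>"
    by (simp add: v_def H_def norm_matrix_inv_mult_le[OF \<open>\<mu> > 0\<close> coercive])
  have "norm w \<le> norm dy / \<mu>"
    by (simp add: w_def H_def norm_matrix_inv_mult_le[OF \<open>\<mu> > 0\<close> coercive])
  also have "\<dots> \<le> M / \<mu>"
    using \<open>norm dy \<le> M\<close> \<open>\<mu> > 0\<close> by (simp add: divide_right_mono)
  finally have "norm w \<le> M / \<mu>" .
  have "d3_yyy g x y v *v w = - (\<beta> *\<^sub>R (H *v gy))"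
    using second by (simp add: J_Ay_def Let_def H_def gy_def v_def w_def matrix_vector_mul_assoc
        eq_neg_iff_add_eq_0)
  then have "\<beta> * (gy \<bullet> (H *v gy)) = - (gy \<bullet> (d3_yyy g x y v *v w))"
    by simp
  then have "\<beta> * (\<mu> * (norm gy)\<^sup>2) \<le> - (gy \<bullet> (d3_yyy g x y v *v w))"
    using coercive[of gy] \<open>\<beta> \<ge> 0\<close> by (metis H_def mult_left_mono)
  also have "\<dots> \<le> norm gy * norm (d3_yyy g x y v *v w)"
    by (metis abs_le_D2 Cauchy_Schwarz_ineq2)
  also have "\<dots> \<le> norm gy * (Q * norm v * norm w)"
    by (rule mult_left_mono[OF norm_d3_yyy_mult_le[OF Hyy_deriv Hyy_lip]]) simp
  also have "\<dots> \<le> norm gy * (Q * (norm gy / \<mu>) * (M / \<mu>))"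
    using \<open>norm v \<le> norm gy / \<mu>\<close> \<open>norm w \<le> M / \<mu>\<close> \<open>Q \<ge> 0\<close> \<open>\<mu> > 0\<close>
    by (intro mult_left_mono mult_mono) auto
  finally have "\<beta> * \<mu> ^ 3 * (norm gy)\<^sup>2 \<le> M * Q * (norm gy)\<^sup>2"
    using \<open>\<mu> > 0\<close> by (simp add: field_simps power2_eq_square power3_eq_cube)
  then have "(norm gy)\<^sup>2 \<le> 0"
    using mult_strict_right_mono[OF \<open>M * Q < \<beta> * \<mu> ^ 3\<close>, of "(norm gy)\<^sup>2"] by fastforce
  then show ?thesis
    by (simp add: gy_def)
qed

theorem proposition4p7:
  fixes f g :: "(real^'n) \<times> (real^'p) \<Rightarrow> real"
    and Df :: "(real^'n) \<times> (real^'p) \<Rightarrow> ((real^'n) \<times> (real^'p)) set"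
    and M\<^sub>f \<mu> L\<^sub>g Q\<^sub>g \<beta> :: real
    and x :: "real^'n" and y :: "real^'p"
  assumes pos: "M\<^sub>f > 0" "\<mu> > 0" "L\<^sub>g > 0" "Q\<^sub>g > 0"
    and f_lip: "M\<^sub>f-lipschitz_on UNIV f"
    and g_C2: "twice_differentiable g"
    and H_pd: "\<And>z v. v \<bullet> (hess_yy g z *v v) \<ge> \<mu> * (norm v)\<^sup>2"
    and grad_lip: "L\<^sub>g-lipschitz_on UNIV (\<lambda>z. (grad_x g z, grad_y g z))"
    and Hyy_lip: "\<And>z w. mat_norm (hess_yy g z - hess_yy g w) \<le> Q\<^sub>g * dist z w"
    and Hxy_lip: "\<And>z w. mat_norm (hess_xy g z - hess_xy g w) \<le> Q\<^sub>g * dist z w"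
    and Hyy_C1: "\<exists>D. (\<forall>z. (hess_yy g has_derivative blinfun_apply (D z)) (at z)) \<and> continuous_on UNIV D"
    and Df_cons: "conservative_field Df" and f_pot: "potential_of f Df"
    and Df_vals: "\<And>z. compact (Df z) \<and> convex (Df z) \<and> (\<forall>v\<in>Df z. norm v \<le> M\<^sub>f)"
    and beta: "\<beta> \<ge> 2 * M\<^sub>f * Q\<^sub>g / \<mu> ^ 3"
  shows "0 \<in> D_h Df g \<beta> x y \<longleftrightarrow> 0 \<in> D_p_hat Df g \<beta> x y"
proof -
  have "2 * (M\<^sub>f * Q\<^sub>g) \<le> \<beta> * \<mu> ^ 3"
    using beta pos(2) by (simp add: field_simps)
  moreover have "0 < M\<^sub>f * Q\<^sub>g"
    using pos by simp
  ultimately have "M\<^sub>f * Q\<^sub>g < \<beta> * \<mu> ^ 3"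
    by linarith
  with \<open>0 < M\<^sub>f * Q\<^sub>g\<close> pos(2) have "\<beta> > 0"
    by (metis less_trans zero_less_mult_pos2 zero_less_power)
  obtain T where T: "(hess_yy g has_derivative T) (at (x, y))"
    using Hyy_C1 by blast
  have "grad_y g (x, y) = 0" if "0 \<in> D_h Df g \<beta> x y"
    by (rule grad_y_zero_if_zero_in_D_h[OF pos(2) _ _ \<open>M\<^sub>f * Q\<^sub>g < \<beta> * \<mu> ^ 3\<close> H_pd T Hyy_lip _ that])
      (use pos(4) \<open>\<beta> > 0\<close> Df_vals in auto)
  then show ?thesis
    using zero_in_D_h_iff_if_grad_y_zero[of g x y Df \<beta>] zero_in_D_p_hat_iff[of \<beta> Df g x y] \<open>\<beta> > 0\<close>
    by auto
qed

end
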